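(* Let $n\ge q\ge 2$ be integers and put $S_1=\sqrt{q^2+4(q-1)(n-2)}$. Let $d$ be an integer and define $j$ by $d=n-1-\frac{n-2+j}{q}$ (so $j=q(n-1-d)-n+2$), and assume $j\in\left[0,\frac{S_1-q}{2}\right)$. Put $s=1-\frac{2d}{n}$, $d_0=n-\frac{j(n-1)}{q(j+q-1)}$, and let $e$ be the unique rational number in $(0,1]$ such that $d_0+e$ is an integer. Define $$f(t)=\Big(t+1+\tfrac{2e}{n}-\tfrac{2j(n-1)}{nq(j+q-1)}\Big)\Big(t+1+\tfrac{2(e-1)}{n}-\tfrac{2j(n-1)}{nq(j+q-1)}\Big)(t-s),$$ and write its Krawtchouk expansion as $f(t)=f_0+f_1Q_1^{(n,q)}(t)+f_2Q_2^{(n,q)}(t)+f_3Q_3^{(n,q)}(t)$. Then $f_1>0$.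
   Context: For integers $n,q$ and $0\le i\le n$, the Krawtchouk polynomial is $K_i^{(n,q)}(z)=\sum_{l=0}^{i}(-1)^l(q-1)^{i-l}\binom{z}{l}\binom{n-z}{i-l}$, and the normalized Krawtchouk polynomial is $Q_i^{(n,q)}(t)=\frac{1}{r_i}K_i^{(n,q)}\!\big(\tfrac{n(1-t)}{2}\big)$ with $r_i=(q-1)^i\binom{n}{i}$; every real polynomial of degree $m\le n$ in $t$ has a unique expansion $\sum_{i=0}^m f_iQ_i^{(n,q)}(t)$. *)

theory Defs
  imports Complex_Main
begin

definition krawtchouk :: "nat \<Rightarrow> nat \<Rightarrow> nat \<Rightarrow> real \<Rightarrow> real" where
  "krawtchouk n q i z =
     (\<Sum>l = 0..i. (-1) ^ l * (real q - 1) ^ (i - l) * (z gchoose l) * ((real n - z) gchoose (i - l)))"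

definition norm_krawtchouk :: "nat \<Rightarrow> nat \<Rightarrow> nat \<Rightarrow> real \<Rightarrow> real" where
  "norm_krawtchouk n q i t =
     krawtchouk n q i (real n * (1 - t) / 2) / ((real q - 1) ^ i * real (n choose i))"

end

theory Submission
  imports Defs
begin

text \<open>In the variable z = n(1 - t)/2 the cubic f is w (a - z) (a - 1 - z) (d - z) with w = 8/n^3 and
  a = d0 + e. Comparing the coefficients of z^3, z^2, z with those of K_3, K_2, K_1 solves a triangular
  system, and f_1 turns out to be a positive multiple of the quadratic
  S^2 - (q + 2j) S + 2j + (q - 1)(3n - 2) in S = n + q(a - n). The bound on j makes its discriminant
  negative, so f_1 > 0 whatever a is.\<close>

lemma gbinomial_2: "(a :: 'a :: field_char_0) gchoose 2 = a * (a - 1) / 2"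
  by (simp add: gbinomial_prod_rev numeral_eq_Suc)

lemma gbinomial_3: "(a :: 'a :: field_char_0) gchoose 3 = a * (a - 1) * (a - 2) / 6"
  by (simp add: gbinomial_prod_rev numeral_eq_Suc)

lemma krawtchouk_1: "krawtchouk n q 1 z = (real q - 1) * real n - real q * z"
  by (simp add: krawtchouk_def algebra_simps)

lemma krawtchouk_2: "krawtchouk n q 2 z =
   real q ^ 2 / 2 * z ^ 2 - ((real q - 1) ^ 2 * (2 * real n - 1) / 2 + (real q - 1) * real n + 1 / 2) * z
   + (real q - 1) ^ 2 * real n * (real n - 1) / 2"
  by (simp add: krawtchouk_def numeral_eq_Suc gbinomial_2[unfolded numeral_2_eq_2] power2_eq_square field_simps)

lemma krawtchouk_3: "krawtchouk n q 3 z =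
   - (real q ^ 3 / 6 * z ^ 3)
   + ((real q - 1) ^ 3 * (real n - 1) / 2 + (real q - 1) ^ 2 * (2 * real n - 1) / 2 + (real q - 1) * (real n + 1) / 2 + 1 / 2) * z ^ 2
   + ((real q - 1) ^ 3 * (6 * real n - 3 * real n ^ 2 - 2) / 6 - (real q - 1) ^ 2 * real n * (real n - 1) / 2
      - (real q - 1) * real n / 2 - 1 / 3) * z
   + (real q - 1) ^ 3 * real n * (real n - 1) * (real n - 2) / 6"
  by (simp add: krawtchouk_def numeral_eq_Suc gbinomial_2[unfolded numeral_2_eq_2]
      gbinomial_3[unfolded numeral_3_eq_3] power2_eq_square power3_eq_cube field_simps)

lemma norm_krawtchouk_affine:
  assumes "n > 0"
  shows "norm_krawtchouk n q i (1 - 2 * z / real n) = krawtchouk n q i z / ((real q - 1) ^ i * real (n choose i))"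
  using assms by (simp add: norm_krawtchouk_def)

lemma cubic_coeffs_eq_0:
  fixes c0 c1 c2 c3 :: real
  assumes "\<And>z. c0 + c1 * z + c2 * z ^ 2 + c3 * z ^ 3 = 0"
  shows "c0 = 0" "c1 = 0" "c2 = 0" "c3 = 0"
proof -
  have "c0 = 0" "c0 + c1 + c2 + c3 = 0" "c0 - c1 + c2 - c3 = 0" "c0 + 2 * c1 + 4 * c2 + 8 * c3 = 0"
    using assms[of 0] assms[of 1] assms[of "-1"] assms[of 2] by simp_all
  then show "c0 = 0" "c1 = 0" "c2 = 0" "c3 = 0" by linarith+
qed

lemma krawtchouk_coeff1_consecutive_roots:
  fixes a c w g0 g1 g2 g3 :: real
  assumes q: "q > 0"
    and expansion: "\<And>z. w * (a - z) * (a - 1 - z) * (c - z) =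
      g0 + g1 * krawtchouk n q 1 z + g2 * krawtchouk n q 2 z + g3 * krawtchouk n q 3 z"
  defines "S \<equiv> real n + real q * (a - real n)"
    and "J \<equiv> real q * (real n - 1 - c) - real n + 2"
  shows "g1 = w / real q ^ 3 * (S\<^sup>2 - (real q + 2 * J) * S + 2 * J + (real q - 1) * (3 * real n - 2))"
proof -
  define N Q where "N = real n" and "Q = real q"
  have Q0: "Q \<noteq> 0" using q unfolding Q_def by simp
  txt \<open>k_ij is, up to sign, the coefficient of z^j in K_i.\<close>
  define k20 k21 where "k20 = (Q - 1) ^ 2 * N * (N - 1) / 2"
    and "k21 = (Q - 1) ^ 2 * (2 * N - 1) / 2 + (Q - 1) * N + 1 / 2"
  define k30 k31 k32 where "k30 = (Q - 1) ^ 3 * N * (N - 1) * (N - 2) / 6"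
    and "k31 = (Q - 1) ^ 3 * (6 * N - 3 * N ^ 2 - 2) / 6 - (Q - 1) ^ 2 * N * (N - 1) / 2 - (Q - 1) * N / 2 - 1 / 3"
    and "k32 = (Q - 1) ^ 3 * (N - 1) / 2 + (Q - 1) ^ 2 * (2 * N - 1) / 2 + (Q - 1) * (N + 1) / 2 + 1 / 2"
  have "(w * a * (a - 1) * c - g0 - g1 * (Q - 1) * N - g2 * k20 - g3 * k30)
      + (g1 * Q + g2 * k21 - g3 * k31 - w * (a * (a - 1) + a * c + (a - 1) * c)) * z
      + (w * (2 * a - 1 + c) - g2 * Q ^ 2 / 2 - g3 * k32) * z ^ 2
      + (g3 * Q ^ 3 / 6 - w) * z ^ 3 = 0" for z
    using expansion[of z]
    unfolding krawtchouk_1 krawtchouk_2 krawtchouk_3 N_def[symmetric] Q_def[symmetric]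
      k20_def k21_def k30_def k31_def k32_def
    by (simp add: algebra_simps power2_eq_square power3_eq_cube)
  note coeffs = cubic_coeffs_eq_0[OF this]
  have g3: "Q ^ 3 * g3 = 6 * w" using coeffs(4) by (simp add: algebra_simps)
  have g2: "Q ^ 2 * g2 = 2 * (w * (2 * a - 1 + c) - g3 * k32)" using coeffs(3) by (simp add: algebra_simps)
  have g1: "Q * g1 = w * (a * (a - 1) + a * c + (a - 1) * c) - g2 * k21 + g3 * k31" using coeffs(2) by (simp add: algebra_simps)
  have "Q ^ 3 * (Q ^ 3 * g1) = Q ^ 5 * (Q * g1)"
    by (simp add: eval_nat_numeral)
  also have "\<dots> = Q ^ 5 * w * (a * (a - 1) + a * c + (a - 1) * c) - Q ^ 3 * k21 * (Q ^ 2 * g2)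
      + Q ^ 2 * k31 * (Q ^ 3 * g3)"
    unfolding g1 by (simp add: algebra_simps eval_nat_numeral)
  also have "\<dots> = Q ^ 5 * w * (a * (a - 1) + a * c + (a - 1) * c)
      - 2 * Q ^ 3 * k21 * w * (2 * a - 1 + c) + (2 * k21 * k32 + Q ^ 2 * k31) * (Q ^ 3 * g3)"
    unfolding g2 by (simp add: algebra_simps eval_nat_numeral)
  also have "\<dots> = Q ^ 3 * (w * (S\<^sup>2 - (Q + 2 * J) * S + 2 * J + (Q - 1) * (3 * N - 2)))"
    unfolding g3 S_def J_def N_def[symmetric] Q_def[symmetric] k21_def k31_def k32_def
    by (simp add: field_simps eval_nat_numeral)
  finally have "Q ^ 3 * g1 = w * (S\<^sup>2 - (Q + 2 * J) * S + 2 * J + (Q - 1) * (3 * N - 2))"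
    using Q0 by (metis mult_left_cancel power_not_zero)
  then show ?thesis
    using Q0 unfolding N_def Q_def by (simp add: field_simps)
qed

lemma quadratic_pos_of_discriminant_neg:
  fixes b c x :: real
  assumes "b\<^sup>2 < 4 * c"
  shows "0 < x\<^sup>2 - b * x + c"
proof -
  have "4 * (x\<^sup>2 - b * x + c) = (2 * x - b)\<^sup>2 + (4 * c - b\<^sup>2)"
    by (simp add: algebra_simps power2_eq_square)
  also have "\<dots> > 0"
    using assms by (intro add_nonneg_pos) auto
  finally show ?thesis by simp
qed

lemma quadratic_pos_of_sqrt_bound:
  fixes N Q J S :: real
  assumes "2 \<le> Q" "Q \<le> N" "0 \<le> J" "2 * J + Q < sqrt (Q\<^sup>2 + 4 * (Q - 1) * (N - 2))"
  shows "0 < S\<^sup>2 - (Q + 2 * J) * S + (2 * J + (Q - 1) * (3 * N - 2))"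
proof (rule quadratic_pos_of_discriminant_neg)
  have "(2 * J + Q)\<^sup>2 < (sqrt (Q\<^sup>2 + 4 * (Q - 1) * (N - 2)))\<^sup>2"
    using assms by (intro power_strict_mono) auto
  also have "\<dots> = Q\<^sup>2 + 4 * (Q - 1) * (N - 2)"
    using assms(1,2) by simp
  also have "\<dots> \<le> 4 * (2 * J + (Q - 1) * (3 * N - 2))"
  proof -
    have "Q * Q \<le> 4 * ((Q - 1) * Q)" using assms(1) by (simp add: algebra_simps)
    also have "\<dots> \<le> 4 * ((Q - 1) * N)" using assms(1,2) by (simp add: mult_left_mono)
    finally show ?thesis
      using assms(3) by (simp add: algebra_simps power2_eq_square) (use zero_le_square[of Q] in linarith)
  qed
  finally show "(Q + 2 * J)\<^sup>2 < 4 * (2 * J + (Q - 1) * (3 * N - 2))"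
    by (simp add: add.commute)
qed

theorem lemma2:
  fixes n q :: nat and d j :: int and S1 s d0 e f0 f1 f2 f3 :: real and f :: "real \<Rightarrow> real"
  assumes nq: "n \<ge> q" "q \<ge> 2"
    and S1_def: "S1 = sqrt (real q ^ 2 + 4 * (real q - 1) * (real n - 2))"
    and j_def: "j = int q * (int n - 1 - d) - int n + 2"
    and j_range: "0 \<le> j" "real_of_int j < (S1 - real q) / 2"
    and s_def: "s = 1 - 2 * real_of_int d / real n"
    and d0_def: "d0 = real n - real_of_int j * (real n - 1) / (real q * (real_of_int j + real q - 1))"
    and e_rat: "e \<in> \<rat>" and e_pos: "0 < e" and e_le: "e \<le> 1" and e_int: "d0 + e \<in> \<int>"
    and f_def: "\<And>t. f t =
        (t + 1 + 2 * e / real n - 2 * real_of_int j * (real n - 1) / (real n * real q * (real_of_int j + real q - 1)))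
      * (t + 1 + 2 * (e - 1) / real n - 2 * real_of_int j * (real n - 1) / (real n * real q * (real_of_int j + real q - 1)))
      * (t - s)"
    and expansion: "\<And>t. f t = f0 + f1 * norm_krawtchouk n q 1 t + f2 * norm_krawtchouk n q 2 t
                              + f3 * norm_krawtchouk n q 3 t"
  shows "f1 > 0"
proof -
  define N Q J D where "N = real n" and "Q = real q" and "J = real_of_int j" and "D = real_of_int d"
  define w a where "w = 8 / N ^ 3" and "a = d0 + e"
  have q0: "q > 0" and N2: "N \<ge> 2" and Q2: "Q \<ge> 2" and NQ: "Q \<le> N" and J0: "J \<ge> 0"
    using nq j_range unfolding N_def Q_def J_def by simp_all
  have f_z: "f (1 - 2 * z / N) = w * (a - z) * (a - 1 - z) * (D - z)" for z
  proof -
    have "2 * real_of_int j * (real n - 1) / (real n * real q * (real_of_int j + real q - 1)) = 2 * (N - d0) / N"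
      unfolding d0_def N_def by (simp add: divide_divide_eq_left mult.assoc mult.left_commute)
    then have "f (1 - 2 * z / N) = (2 - 2 * z / N + 2 * e / N - 2 * (N - d0) / N)
        * (2 - 2 * z / N + 2 * (e - 1) / N - 2 * (N - d0) / N) * (1 - 2 * z / N - s)"
      unfolding f_def N_def by simp
    also have "\<dots> = w * (a - z) * (a - 1 - z) * (D - z)"
      unfolding s_def w_def a_def N_def[symmetric] D_def[symmetric]
      using N2 by (simp add: field_simps power3_eq_cube)
    finally show ?thesis .
  qed
  have expansion_z: "w * (a - z) * (a - 1 - z) * (D - z) =
      f0 + f1 / ((Q - 1) * N) * krawtchouk n q 1 z + f2 / ((Q - 1) ^ 2 * real (n choose 2)) * krawtchouk n q 2 z
      + f3 / ((Q - 1) ^ 3 * real (n choose 3)) * krawtchouk n q 3 z" for z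
    using expansion[of "1 - 2 * z / N"] f_z[of z] nq unfolding N_def Q_def by (simp add: norm_krawtchouk_affine)
  have JD: "J = Q * (N - 1 - D) - N + 2" using j_def unfolding J_def Q_def N_def D_def by simp
  define S where "S = N + Q * (a - N)"
  have "f1 / ((Q - 1) * N) = w / Q ^ 3 * (S\<^sup>2 - (Q + 2 * J) * S + 2 * J + (Q - 1) * (3 * N - 2))"
    using krawtchouk_coeff1_consecutive_roots[OF q0 expansion_z] unfolding S_def JD N_def Q_def by simp
  also have "\<dots> > 0"
    using quadratic_pos_of_sqrt_bound[OF Q2 NQ J0, of S] j_range(2) N2 Q2
    unfolding S1_def w_def N_def Q_def J_def by (simp add: add.assoc)
  finally have "0 < f1 / ((Q - 1) * N)" .
  moreover have "0 < (Q - 1) * N" using N2 Q2 by simp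
  ultimately show ?thesis by (simp add: zero_less_divide_iff)
qed

end
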